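(* Let $(A,\mathcal H)$ be a commutative Hopf algebroid and $(A,\mathcal K)$ a sub-Hopf algebroid, with inclusion $\phi:\mathcal K\to\mathcal H$ and projection $\pi:\mathcal H\to\mathcal H/\mathcal H\mathcal K^+$. For every commutative $\Bbbk$-algebra $R$, the kernel of the restriction map $\Phi_R:\mathrm{CAlg}_\Bbbk(\mathcal H,R)\to\mathrm{CAlg}_\Bbbk(\mathcal K,R)$, $f\mapsto f\circ\phi$, namely $\{f: f\circ\phi=x\circ\varepsilon|_{\mathcal K}\text{ for some }x\in\mathrm{CAlg}_\Bbbk(A,R)\}$, equals $\{h\circ\pi:h\in\mathrm{CAlg}_\Bbbk(\mathcal H/\mathcal H\mathcal K^+,R)\}$; equivalently, the map $\mathscr G_{\mathcal H}(R)/\mathscr G_{\mathcal H/\mathcal H\mathcal K^+}(R)\to\mathscr G_{\mathcal K}(R)$, $\mathscr G_{\mathcal H/\mathcal H\mathcal K^+}(R)\bullet g\mapsto g\circ\phi$, is injective.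
   Context: A commutative Hopf algebroid $(A,\mathcal H)$ over a field $\Bbbk$: commutative $\Bbbk$-algebras $A,\mathcal H$ with algebra maps $s,t:A\to\mathcal H$, $\varepsilon:\mathcal H\to A$, $\Delta:\mathcal H\to\mathcal H\otimes_A\mathcal H$ (left factor an $A$-module via $t$, right via $s$), $\mathcal S$ such that $(\mathcal H,\Delta,\varepsilon)$ is a coassociative counital $A$-coring, $\mathcal Ss=t$, $\mathcal St=s$, $\mathcal S^2=\mathrm{id}$, $\sum\mathcal S(u_1)u_2=t\varepsilon(u)$, $\sum u_1\mathcal S(u_2)=s\varepsilon(u)$ ($\Delta(u)=\sum u_1\otimes_Au_2$). A sub-Hopf algebroid $\mathcal K$: subalgebra containing $s(A),t(A)$, stable under $\mathcal S$, with $\Delta(\mathcal K)\subseteq\mathcal K\otimes_A\mathcal K$; $\mathcal K^+=\mathcal K\cap\ker\varepsilon$. $\mathscr G_{\mathcal H}(R)=\mathrm{CAlg}_\Bbbk(\mathcal H,R)$ is a groupoid with objects $\mathrm{CAlg}_\Bbbk(A,R)$, source $\varphi\mapsto\varphi s$, target $\varphi\mapsto\varphi t$, composition $(\psi\bullet\varphi)(h)=\sum\varphi(h_1)\psi(h_2)$ (similarly $\mathscr G_{\mathcal K}(R)$). $\mathscr G_{\mathcal H/\mathcal H\mathcal K^+}(R)=\mathrm{CAlg}_\Bbbk(\mathcal H/\mathcal H\mathcal K^+,R)$ embeds via $h\mapsto h\pi$, and $\mathscr G_{\mathcal H}(R)/\mathscr G_{\mathcal H/\mathcal H\mathcal K^+}(R)$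 denotes the set of orbits $\{(h\circ\pi)\bullet g\}$ of the left action by composition. *)

theory Defs
  imports "HOL-Library.Poly_Mapping" "HOL-Algebra.QuotRing"
begin

definition kalg :: "('k::field \<Rightarrow> 'a::comm_ring_1) \<Rightarrow> bool" where
  "kalg \<iota> \<longleftrightarrow> \<iota> 1 = 1 \<and> (\<forall>x y. \<iota> (x + y) = \<iota> x + \<iota> y) \<and> (\<forall>x y. \<iota> (x * y) = \<iota> x * \<iota> y)"

definition calg :: "('k::field \<Rightarrow> 'a::comm_ring_1) \<Rightarrow> ('k \<Rightarrow> 'b::comm_ring_1) \<Rightarrow> ('a \<Rightarrow> 'b) \<Rightarrow> bool" where
  "calg \<iota>a \<iota>b f \<longleftrightarrow> f 1 = 1 \<and> (\<forall>x y. f (x + y) = f x + f y) \<and> (\<forall>x y. f (x * y) = f x * f y)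
     \<and> (\<forall>c. f (\<iota>a c) = \<iota>b c)"

text \<open>Elements are represented by formal Z-linear combinations of pure tensors;
  the tensor product is the quotient by the subgroup generated by biadditivity
  and A-balancedness relations (left factor an A-module via t, right via s).\<close>

inductive_set tz2 :: "('a \<Rightarrow> 'h::comm_ring_1) \<Rightarrow> ('a \<Rightarrow> 'h) \<Rightarrow> ('h \<times> 'h \<Rightarrow>\<^sub>0 int) set"
  for s t where
  tz2_zero: "0 \<in> tz2 s t"
| tz2_add1: "Poly_Mapping.single (u + u', v) 1 - Poly_Mapping.single (u, v) 1
             - Poly_Mapping.single (u', v) 1 \<in> tz2 s t"
| tz2_add2: "Poly_Mapping.single (u, v + v') 1 - Poly_Mapping.single (u, v) 1
             - Poly_Mapping.single (u, v') 1 \<in> tz2 s t"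
| tz2_bal: "Poly_Mapping.single (u * t a, v) 1 - Poly_Mapping.single (u, s a * v) 1 \<in> tz2 s t"
| tz2_diff: "X \<in> tz2 s t \<Longrightarrow> Y \<in> tz2 s t \<Longrightarrow> X - Y \<in> tz2 s t"

inductive_set tz3 :: "('a \<Rightarrow> 'h::comm_ring_1) \<Rightarrow> ('a \<Rightarrow> 'h) \<Rightarrow> ('h \<times> 'h \<times> 'h \<Rightarrow>\<^sub>0 int) set"
  for s t where
  tz3_zero: "0 \<in> tz3 s t"
| tz3_add1: "Poly_Mapping.single (u + u', v, w) 1 - Poly_Mapping.single (u, v, w) 1
             - Poly_Mapping.single (u', v, w) 1 \<in> tz3 s t"
| tz3_add2: "Poly_Mapping.single (u, v + v', w) 1 - Poly_Mapping.single (u, v, w) 1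
             - Poly_Mapping.single (u, v', w) 1 \<in> tz3 s t"
| tz3_add3: "Poly_Mapping.single (u, v, w + w') 1 - Poly_Mapping.single (u, v, w) 1
             - Poly_Mapping.single (u, v, w') 1 \<in> tz3 s t"
| tz3_bal1: "Poly_Mapping.single (u * t a, v, w) 1 - Poly_Mapping.single (u, s a * v, w) 1 \<in> tz3 s t"
| tz3_bal2: "Poly_Mapping.single (u, v * t a, w) 1 - Poly_Mapping.single (u, v, s a * w) 1 \<in> tz3 s t"
| tz3_diff: "X \<in> tz3 s t \<Longrightarrow> Y \<in> tz3 s t \<Longrightarrow> X - Y \<in> tz3 s t"

definition teq2 :: "('a \<Rightarrow> 'h::comm_ring_1) \<Rightarrow> ('a \<Rightarrow> 'h) \<Rightarrow> ('h \<times> 'h \<Rightarrow>\<^sub>0 int) \<Rightarrow> ('h \<times> 'h \<Rightarrow>\<^sub>0 int) \<Rightarrow> bool" where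
  "teq2 s t X Y \<longleftrightarrow> X - Y \<in> tz2 s t"

definition tpure :: "'h \<Rightarrow> 'h \<Rightarrow> ('h \<times> 'h \<Rightarrow>\<^sub>0 int)" where
  "tpure u v = Poly_Mapping.single (u, v) 1"

definition tmul2 :: "('h::comm_ring_1 \<times> 'h \<Rightarrow>\<^sub>0 int) \<Rightarrow> ('h \<times> 'h \<Rightarrow>\<^sub>0 int) \<Rightarrow> ('h \<times> 'h \<Rightarrow>\<^sub>0 int)" where
  "tmul2 X Y = (\<Sum>p\<in>Poly_Mapping.keys X. \<Sum>q\<in>Poly_Mapping.keys Y.
      Poly_Mapping.single (fst p * fst q, snd p * snd q) (Poly_Mapping.lookup X p * Poly_Mapping.lookup Y q))"

definition lact2 :: "'h::comm_ring_1 \<Rightarrow> ('h \<times> 'h \<Rightarrow>\<^sub>0 int) \<Rightarrow> ('h \<times> 'h \<Rightarrow>\<^sub>0 int)" where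
  "lact2 h X = (\<Sum>p\<in>Poly_Mapping.keys X. Poly_Mapping.single (h * fst p, snd p) (Poly_Mapping.lookup X p))"

definition ract2 :: "('h::comm_ring_1 \<times> 'h \<Rightarrow>\<^sub>0 int) \<Rightarrow> 'h \<Rightarrow> ('h \<times> 'h \<Rightarrow>\<^sub>0 int)" where
  "ract2 X h = (\<Sum>p\<in>Poly_Mapping.keys X. Poly_Mapping.single (fst p, snd p * h) (Poly_Mapping.lookup X p))"

definition delta_left :: "('h \<Rightarrow> ('h \<times> 'h \<Rightarrow>\<^sub>0 int)) \<Rightarrow> ('h \<times> 'h \<Rightarrow>\<^sub>0 int) \<Rightarrow> ('h \<times> 'h \<times> 'h \<Rightarrow>\<^sub>0 int)" where
  "delta_left D X = (\<Sum>p\<in>Poly_Mapping.keys X. \<Sum>q\<in>Poly_Mapping.keys (D (fst p)).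
      Poly_Mapping.single (fst q, snd q, snd p) (Poly_Mapping.lookup X p * Poly_Mapping.lookup (D (fst p)) q))"

definition delta_right :: "('h \<Rightarrow> ('h \<times> 'h \<Rightarrow>\<^sub>0 int)) \<Rightarrow> ('h \<times> 'h \<Rightarrow>\<^sub>0 int) \<Rightarrow> ('h \<times> 'h \<times> 'h \<Rightarrow>\<^sub>0 int)" where
  "delta_right D X = (\<Sum>p\<in>Poly_Mapping.keys X. \<Sum>q\<in>Poly_Mapping.keys (D (snd p)).
      Poly_Mapping.single (fst p, fst q, snd q) (Poly_Mapping.lookup X p * Poly_Mapping.lookup (D (snd p)) q))"

text \<open>Sum \<Sum> \<beta>(u_1,u_2) over a representative \<Sum> u_1 \<otimes> u_2 (used only for balanced biadditive \<beta>).\<close>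
definition tsum :: "('h \<times> 'h \<Rightarrow>\<^sub>0 int) \<Rightarrow> ('h \<Rightarrow> 'h \<Rightarrow> 'r::comm_ring_1) \<Rightarrow> 'r" where
  "tsum X \<beta> = (\<Sum>p\<in>Poly_Mapping.keys X. of_int (Poly_Mapping.lookup X p) * \<beta> (fst p) (snd p))"

text \<open>D u is a representative of \<Delta>(u) \<in> H \<otimes>_A H.\<close>
definition hopf_algebroid ::
  "('k::field \<Rightarrow> 'a::comm_ring_1) \<Rightarrow> ('k \<Rightarrow> 'h::comm_ring_1) \<Rightarrow> ('a \<Rightarrow> 'h) \<Rightarrow> ('a \<Rightarrow> 'h)
   \<Rightarrow> ('h \<Rightarrow> 'a) \<Rightarrow> ('h \<Rightarrow> ('h \<times> 'h \<Rightarrow>\<^sub>0 int)) \<Rightarrow> ('h \<Rightarrow> 'h) \<Rightarrow> bool" where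
  "hopf_algebroid \<iota>A \<iota>H s t \<epsilon> D S \<longleftrightarrow>
     kalg \<iota>A \<and> kalg \<iota>H \<and> calg \<iota>A \<iota>H s \<and> calg \<iota>A \<iota>H t \<and> calg \<iota>H \<iota>A \<epsilon> \<and> calg \<iota>H \<iota>H S \<and>
     \<comment> \<open>\<Delta> is a k-algebra map into H \<otimes>_A H\<close>
     teq2 s t (D 1) (tpure 1 1) \<and>
     (\<forall>u v. teq2 s t (D (u + v)) (D u + D v)) \<and>
     (\<forall>u v. teq2 s t (D (u * v)) (tmul2 (D u) (D v))) \<and>
     (\<forall>c. teq2 s t (D (\<iota>H c)) (tpure (\<iota>H c) 1)) \<and>
     \<comment> \<open>\<Delta> is an A-bimodule map (coring)\<close>
     (\<forall>a u. teq2 s t (D (s a * u)) (lact2 (s a) (D u))) \<and>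
     (\<forall>a u. teq2 s t (D (u * t a)) (ract2 (D u) (t a))) \<and>
     \<comment> \<open>coassociativity\<close>
     (\<forall>u. delta_left D (D u) - delta_right D (D u) \<in> tz3 s t) \<and>
     \<comment> \<open>\<epsilon> is an A-bimodule map and counitality\<close>
     (\<forall>a u. \<epsilon> (s a * u) = a * \<epsilon> u) \<and> (\<forall>a u. \<epsilon> (u * t a) = \<epsilon> u * a) \<and>
     (\<forall>u. tsum (D u) (\<lambda>x y. s (\<epsilon> x) * y) = u) \<and>
     (\<forall>u. tsum (D u) (\<lambda>x y. x * t (\<epsilon> y)) = u) \<and>
     \<comment> \<open>antipode\<close>
     S \<circ> s = t \<and> S \<circ> t = s \<and> (\<forall>u. S (S u) = u) \<and>
     (\<forall>u. tsum (D u) (\<lambda>x y. S x * y) = t (\<epsilon> u)) \<and>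
     (\<forall>u. tsum (D u) (\<lambda>x y. x * S y) = s (\<epsilon> u))"

definition sub_hopf_algebroid ::
  "('k::field \<Rightarrow> 'h::comm_ring_1) \<Rightarrow> ('a \<Rightarrow> 'h) \<Rightarrow> ('a \<Rightarrow> 'h)
   \<Rightarrow> ('h \<Rightarrow> ('h \<times> 'h \<Rightarrow>\<^sub>0 int)) \<Rightarrow> ('h \<Rightarrow> 'h) \<Rightarrow> 'h set \<Rightarrow> bool" where
  "sub_hopf_algebroid \<iota>H s t D S K \<longleftrightarrow>
     1 \<in> K \<and> (\<forall>x\<in>K. \<forall>y\<in>K. x + y \<in> K \<and> x * y \<in> K) \<and> (\<forall>c. \<forall>x\<in>K. \<iota>H c * x \<in> K) \<and>
     range s \<subseteq> K \<and> range t \<subseteq> K \<and> S ` K \<subseteq> K \<and>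
     (\<forall>u\<in>K. \<exists>X. teq2 s t (D u) X \<and> Poly_Mapping.keys X \<subseteq> K \<times> K)"

definition type_ring :: "('a::comm_ring_1) ring" where
  "type_ring = \<lparr>carrier = UNIV, monoid.mult = (*), one = 1, zero = 0, add = (+)\<rparr>"

definition Kplus :: "('h \<Rightarrow> 'a::zero) \<Rightarrow> 'h set \<Rightarrow> 'h set" where
  "Kplus \<epsilon> K = K \<inter> {u. \<epsilon> u = 0}"

definition HKplus :: "('h \<Rightarrow> 'a::zero) \<Rightarrow> 'h::comm_ring_1 set \<Rightarrow> 'h set" where
  "HKplus \<epsilon> K = genideal (type_ring :: 'h ring) (Kplus \<epsilon> K)"

definition qproj :: "('h \<Rightarrow> 'a::zero) \<Rightarrow> 'h::comm_ring_1 set \<Rightarrow> 'h \<Rightarrow> 'h set" where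
  "qproj \<epsilon> K x = HKplus \<epsilon> K +>\<^bsub>(type_ring :: 'h ring)\<^esub> x"

definition qcalg :: "('k::field \<Rightarrow> 'h::comm_ring_1) \<Rightarrow> ('k \<Rightarrow> 'r::comm_ring_1)
    \<Rightarrow> ('h \<Rightarrow> 'a::zero) \<Rightarrow> 'h set \<Rightarrow> ('h set \<Rightarrow> 'r) \<Rightarrow> bool" where
  "qcalg \<iota>H \<iota>R \<epsilon> K h \<longleftrightarrow>
     h \<in> ring_hom ((type_ring :: 'h ring) Quot HKplus \<epsilon> K) (type_ring :: 'r ring) \<and>
     (\<forall>c. h (qproj \<epsilon> K (\<iota>H c)) = \<iota>R c)"

definition gcomp :: "('h \<Rightarrow> ('h \<times> 'h \<Rightarrow>\<^sub>0 int)) \<Rightarrow> ('h \<Rightarrow> 'r::comm_ring_1) \<Rightarrow> ('h \<Rightarrow> 'r) \<Rightarrow> ('h \<Rightarrow> 'r)" where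
  "gcomp D \<psi> \<phi> = (\<lambda>u. tsum (D u) (\<lambda>x y. \<phi> x * \<psi> y))"

text \<open>The orbit G_{H/HK^+}(R) \<bullet> g of g under the left action by composition
  (only composable pairs: target of g = source of h \<circ> \<pi>).\<close>
definition orbit ::
  "('k::field \<Rightarrow> 'h::comm_ring_1) \<Rightarrow> ('k \<Rightarrow> 'r::comm_ring_1) \<Rightarrow> ('a::zero \<Rightarrow> 'h) \<Rightarrow> ('a \<Rightarrow> 'h)
   \<Rightarrow> ('h \<Rightarrow> 'a) \<Rightarrow> ('h \<Rightarrow> ('h \<times> 'h \<Rightarrow>\<^sub>0 int)) \<Rightarrow> 'h set \<Rightarrow> ('h \<Rightarrow> 'r) \<Rightarrow> ('h \<Rightarrow> 'r) set" where
  "orbit \<iota>H \<iota>R s t \<epsilon> D K g =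
     {gcomp D (h \<circ> qproj \<epsilon> K) g | h. qcalg \<iota>H \<iota>R \<epsilon> K h \<and> h \<circ> qproj \<epsilon> K \<circ> s = g \<circ> t}"

end

theory Submission
  imports Defs
begin

(* Restriction of arrows to K is compatible with composition, because \<Delta>(K) lies in K \<otimes>_A K.
  Its kernel N consists of the algebra maps f agreeing on K with the identity arrow f \<circ> s \<circ> \<epsilon>,
  i.e. killing every k - s(\<epsilon> k) with k \<in> K; these elements generate the ideal H K^+, so N is
  exactly the set of maps factoring through H / H K^+.  Arrows of N act trivially on restrictions,
  so restriction is constant on orbits.  Conversely, if g and g' agree on K then g' \<bullet> g\<inverse>
  agrees on K with g \<bullet> g\<inverse>, an identity, hence lies in N, and N \<bullet> g' = N \<bullet> (g' \<bullet> g\<inverse>) \<bullet> g = N \<bullet> g. *)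

section \<open>Algebra maps and quotient rings\<close>

lemma (in ring_hom_ring) quotient_lift:
  assumes I: "ideal I R" and ker: "I \<subseteq> a_kernel R S h"
  shows "(\<lambda>X. the_elem (h ` X)) \<in> ring_hom (R Quot I) S"
    and "x \<in> carrier R \<Longrightarrow> the_elem (h ` (I +> x)) = h x"
proof -
  interpret I: ideal I R by (rule I)
  have img: "h ` (I +> x) = {h x}" if x: "x \<in> carrier R" for x
  proof -
    have "h (i \<oplus> x) = h x" if i: "i \<in> I" for i
    proof -
      have "i \<in> carrier R" "h i = \<zero>\<^bsub>S\<^esub>" using i ker unfolding a_kernel_def' by blast+
      then show ?thesis using x by (metis hom_add hom_closed S.l_zero)
    qed
    then have "h ` (\<Union>i\<in>I. {i \<oplus> x}) = {h x}"
      using I.zero_closed x by (auto intro!: image_eqI[where x = "\<zero> \<oplus> x"])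
    then show ?thesis by (simp only: a_r_coset_def')
  qed
  then show lift_rcos: "the_elem (h ` (I +> x)) = h x" if "x \<in> carrier R" for x
    using that by simp
  show "(\<lambda>X. the_elem (h ` X)) \<in> ring_hom (R Quot I) S"
  proof (rule ring_hom_memI)
    fix X Y assume "X \<in> carrier (R Quot I)" "Y \<in> carrier (R Quot I)"
    then obtain x y where x: "x \<in> carrier R" "X = I +> x" and y: "y \<in> carrier R" "Y = I +> y"
      unfolding FactRing_def A_RCOSETS_def' by auto
    show "the_elem (h ` X) \<in> carrier S" using x by (simp add: lift_rcos)
    have "X \<otimes>\<^bsub>R Quot I\<^esub> Y = I +> (x \<otimes> y)" "X \<oplus>\<^bsub>R Quot I\<^esub> Y = I +> (x \<oplus> y)"
      using x y by (simp_all add: ring_hom_mult[OF I.rcos_ring_hom] ring_hom_add[OF I.rcos_ring_hom])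
    then show "the_elem (h ` (X \<otimes>\<^bsub>R Quot I\<^esub> Y)) = the_elem (h ` X) \<otimes>\<^bsub>S\<^esub> the_elem (h ` Y)"
      and "the_elem (h ` (X \<oplus>\<^bsub>R Quot I\<^esub> Y)) = the_elem (h ` X) \<oplus>\<^bsub>S\<^esub> the_elem (h ` Y)"
      using x y by (simp_all add: lift_rcos)
  next
    show "the_elem (h ` \<one>\<^bsub>R Quot I\<^esub>) = \<one>\<^bsub>S\<^esub>"
      by (simp add: FactRing_def lift_rcos)
  qed
qed

lemma type_ring_simps [simp]:
  "carrier (type_ring :: 'a::comm_ring_1 ring) = UNIV"
  "mult type_ring = ((*) :: 'a \<Rightarrow> _)" "one (type_ring :: 'a ring) = 1"
  "zero (type_ring :: 'a ring) = 0" "add type_ring = ((+) :: 'a \<Rightarrow> _)"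
  by (simp_all add: type_ring_def)

lemma cring_type_ring: "cring (type_ring :: 'a::comm_ring_1 ring)"
proof (rule cringI)
  show "abelian_group (type_ring :: 'a ring)"
    by (rule abelian_groupI) (auto simp: algebra_simps intro: exI[of _ "- x" for x])
  show "comm_monoid (type_ring :: 'a ring)"
    by (rule comm_monoidI) (auto simp: algebra_simps)
qed (auto simp: algebra_simps)

lemma ring_type_ring: "ring (type_ring :: 'a::comm_ring_1 ring)"
  using cring_type_ring by (rule cring.axioms(1))

lemma calg_simps:
  assumes "calg ia ib f"
  shows "f 0 = 0" "f (- x) = - f x" "f (x - y) = f x - f y" "f 1 = 1"
    "f (x + y) = f x + f y" "f (x * y) = f x * f y" "f (ia c) = ib c"
proof -
  have add: "f (x + y) = f x + f y" for x y using assms by (simp add: calg_def)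
  show zero: "f 0 = 0" using add[of 0 0] by simp
  show uminus: "f (- x) = - f x" for x
    using add[of x "- x"] zero by (simp add: add.inverse_unique)
  show "f (x - y) = f x - f y" using add[of x "- y"] uminus[of y] by simp
  show "f 1 = 1" "f (x + y) = f x + f y" "f (x * y) = f x * f y" "f (ia c) = ib c"
    using assms by (simp_all add: calg_def)
qed

lemma calg_of_int: "calg ia ib f \<Longrightarrow> f (of_int n) = of_int n"
proof -
  assume f: "calg ia ib f"
  have "f (of_nat m) = of_nat m" for m
    by (induction m) (simp_all add: calg_simps[OF f])
  then show ?thesis by (cases n rule: int_cases) (simp_all add: calg_simps[OF f])
qed

lemma calg_sum: "calg ia ib f \<Longrightarrow> f (sum g A) = (\<Sum>a\<in>A. f (g a))"
  by (induction A rule: infinite_finite_induct) (simp_all add: calg_simps)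

lemma calg_comp: "calg ia ib f \<Longrightarrow> calg ib ic g \<Longrightarrow> calg ia ic (g \<circ> f)"
  by (simp add: calg_def)

lemma kalg_imp_calg: "kalg \<iota> \<Longrightarrow> calg id \<iota> \<iota>"
  by (simp add: kalg_def calg_def)

lemma calg_iff_ring_hom:
  "calg ia ib f \<longleftrightarrow> f \<in> ring_hom type_ring type_ring \<and> (\<forall>c. f (ia c) = ib c)"
  by (auto simp: calg_def ring_hom_def)

section \<open>Balanced functionals on formal tensors\<close>

definition lin_ext :: "('p \<Rightarrow>\<^sub>0 int) \<Rightarrow> ('p \<Rightarrow> 'r::comm_ring_1) \<Rightarrow> 'r" where
  "lin_ext X \<beta> = (\<Sum>p\<in>Poly_Mapping.keys X. of_int (Poly_Mapping.lookup X p) * \<beta> p)"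

lemma lin_ext_superset:
  "finite A \<Longrightarrow> Poly_Mapping.keys X \<subseteq> A
    \<Longrightarrow> lin_ext X \<beta> = (\<Sum>p\<in>A. of_int (Poly_Mapping.lookup X p) * \<beta> p)"
  unfolding lin_ext_def by (rule sum.mono_neutral_left) (auto simp: in_keys_iff)

lemma lin_ext_add: "lin_ext (X + Y) \<beta> = lin_ext X \<beta> + lin_ext Y \<beta>"
proof -
  let ?A = "Poly_Mapping.keys X \<union> Poly_Mapping.keys Y"
  have "lin_ext (X + Y) \<beta> = (\<Sum>p\<in>?A. of_int (Poly_Mapping.lookup (X + Y) p) * \<beta> p)"
    by (rule lin_ext_superset) (auto dest: subsetD[OF keys_add])
  also have "\<dots> = (\<Sum>p\<in>?A. of_int (Poly_Mapping.lookup X p) * \<beta> p)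
      + (\<Sum>p\<in>?A. of_int (Poly_Mapping.lookup Y p) * \<beta> p)"
    by (simp add: lookup_add distrib_right sum.distrib)
  also have "\<dots> = lin_ext X \<beta> + lin_ext Y \<beta>"
    by (simp add: lin_ext_superset[symmetric])
  finally show ?thesis .
qed

lemma lin_ext_zero [simp]: "lin_ext 0 \<beta> = 0"
  by (simp add: lin_ext_def)

lemma lin_ext_diff: "lin_ext (X - Y) \<beta> = lin_ext X \<beta> - lin_ext Y \<beta>"
  using lin_ext_add[of "X - Y" Y \<beta>] by (simp add: algebra_simps)

lemma lin_ext_single [simp]: "lin_ext (Poly_Mapping.single p n) \<beta> = of_int n * \<beta> p"
  by (cases "n = 0") (simp_all add: lin_ext_def)

lemma lin_ext_sum: "lin_ext (sum F A) \<beta> = (\<Sum>a\<in>A. lin_ext (F a) \<beta>)"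
  by (induction A rule: infinite_finite_induct) (simp_all add: lin_ext_add)

lemma lin_ext_cong:
  "(\<And>p. p \<in> Poly_Mapping.keys X \<Longrightarrow> \<beta> p = \<beta>' p) \<Longrightarrow> lin_ext X \<beta> = lin_ext X \<beta>'"
  by (simp add: lin_ext_def)

lemma calg_lin_ext: "calg ia ib f \<Longrightarrow> f (lin_ext X \<beta>) = lin_ext X (\<lambda>p. f (\<beta> p))"
  by (simp add: lin_ext_def calg_sum calg_simps calg_of_int)

lemma mult_lin_ext: "c * lin_ext X \<beta> = lin_ext X (\<lambda>p. c * \<beta> p)"
  by (simp add: lin_ext_def sum_distrib_left algebra_simps)

lemma tsum_eq_lin_ext: "tsum X \<beta> = lin_ext X (\<lambda>p. \<beta> (fst p) (snd p))"
  by (simp add: tsum_def lin_ext_def)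

lemma tsum_tpure: "tsum (tpure u v) \<beta> = \<beta> u v"
  by (simp add: tpure_def tsum_eq_lin_ext)

lemma lin_ext_tmul2:
  "lin_ext (tmul2 X Y) \<beta> = (\<Sum>p\<in>Poly_Mapping.keys X. \<Sum>q\<in>Poly_Mapping.keys Y.
     of_int (Poly_Mapping.lookup X p) * of_int (Poly_Mapping.lookup Y q) * \<beta> (fst p * fst q, snd p * snd q))"
  by (simp add: tmul2_def lin_ext_sum)

lemma lin_ext_lact2: "lin_ext (lact2 h X) \<beta> = lin_ext X (\<lambda>p. \<beta> (h * fst p, snd p))"
  unfolding lact2_def lin_ext_sum lin_ext_single by (simp add: lin_ext_def)

lemma lin_ext_ract2: "lin_ext (ract2 X h) \<beta> = lin_ext X (\<lambda>p. \<beta> (fst p, snd p * h))"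
  unfolding ract2_def lin_ext_sum lin_ext_single by (simp add: lin_ext_def)

lemma lin_ext_delta_left:
  "lin_ext (delta_left D X) \<gamma> = lin_ext X (\<lambda>p. lin_ext (D (fst p)) (\<lambda>q. \<gamma> (fst q, snd q, snd p)))"
  unfolding delta_left_def lin_ext_sum lin_ext_single
  by (simp add: lin_ext_def sum_distrib_left algebra_simps)

lemma lin_ext_delta_right:
  "lin_ext (delta_right D X) \<gamma> = lin_ext X (\<lambda>p. lin_ext (D (snd p)) (\<lambda>q. \<gamma> (fst p, fst q, snd q)))"
  unfolding delta_right_def lin_ext_sum lin_ext_single
  by (simp add: lin_ext_def sum_distrib_left algebra_simps)

definition balanced2 :: "('a \<Rightarrow> 'h::comm_ring_1) \<Rightarrow> ('a \<Rightarrow> 'h) \<Rightarrow> ('h \<Rightarrow> 'h \<Rightarrow> 'r::comm_ring_1) \<Rightarrow> bool"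
  where "balanced2 s t \<beta> \<longleftrightarrow>
    (\<forall>u u' v. \<beta> (u + u') v = \<beta> u v + \<beta> u' v) \<and> (\<forall>u v v'. \<beta> u (v + v') = \<beta> u v + \<beta> u v') \<and>
    (\<forall>u a v. \<beta> (u * t a) v = \<beta> u (s a * v))"

definition balanced3 ::
  "('a \<Rightarrow> 'h::comm_ring_1) \<Rightarrow> ('a \<Rightarrow> 'h) \<Rightarrow> ('h \<Rightarrow> 'h \<Rightarrow> 'h \<Rightarrow> 'r::comm_ring_1) \<Rightarrow> bool"
  where "balanced3 s t \<gamma> \<longleftrightarrow>
    (\<forall>u u' v w. \<gamma> (u + u') v w = \<gamma> u v w + \<gamma> u' v w) \<and>
    (\<forall>u v v' w. \<gamma> u (v + v') w = \<gamma> u v w + \<gamma> u v' w) \<and>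
    (\<forall>u v w w'. \<gamma> u v (w + w') = \<gamma> u v w + \<gamma> u v w') \<and>
    (\<forall>u a v w. \<gamma> (u * t a) v w = \<gamma> u (s a * v) w) \<and> (\<forall>u a v w. \<gamma> u (v * t a) w = \<gamma> u v (s a * w))"

lemma lin_ext_tz2:
  "Z \<in> tz2 s t \<Longrightarrow> balanced2 s t \<beta> \<Longrightarrow> lin_ext Z (\<lambda>p. \<beta> (fst p) (snd p)) = 0"
  by (induction rule: tz2.induct) (simp_all add: lin_ext_diff balanced2_def)

lemma lin_ext_tz3:
  "Z \<in> tz3 s t \<Longrightarrow> balanced3 s t \<gamma> \<Longrightarrow> lin_ext Z (\<lambda>p. \<gamma> (fst p) (fst (snd p)) (snd (snd p))) = 0"
  by (induction rule: tz3.induct) (simp_all add: lin_ext_diff balanced3_def)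

lemma tsum_teq2: "teq2 s t X Y \<Longrightarrow> balanced2 s t \<beta> \<Longrightarrow> tsum X \<beta> = tsum Y \<beta>"
  using lin_ext_tz2[of "X - Y" s t \<beta>] by (simp add: teq2_def tsum_eq_lin_ext lin_ext_diff)

section \<open>The groupoid of a commutative Hopf algebroid\<close>

locale comm_hopf_algebroid =
  fixes \<iota>A :: "'k::field \<Rightarrow> 'a::comm_ring_1" and \<iota>H :: "'k \<Rightarrow> 'h::comm_ring_1"
    and s t :: "'a \<Rightarrow> 'h" and \<epsilon> :: "'h \<Rightarrow> 'a"
    and D :: "'h \<Rightarrow> ('h \<times> 'h \<Rightarrow>\<^sub>0 int)" and S :: "'h \<Rightarrow> 'h"
  assumes hopf: "hopf_algebroid \<iota>A \<iota>H s t \<epsilon> D S"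
begin

lemma kalg_H: "kalg \<iota>H"
  and source_calg: "calg \<iota>A \<iota>H s" and target_calg: "calg \<iota>A \<iota>H t"
  and counit_calg: "calg \<iota>H \<iota>A \<epsilon>" and antipode_calg: "calg \<iota>H \<iota>H S"
  using hopf by (simp_all add: hopf_algebroid_def)

lemma D_one: "teq2 s t (D 1) (tpure 1 1)"
  and D_add: "teq2 s t (D (u + v)) (D u + D v)"
  and D_mult: "teq2 s t (D (u * v)) (tmul2 (D u) (D v))"
  and D_scalar: "teq2 s t (D (\<iota>H c)) (tpure (\<iota>H c) 1)"
  and D_source_mult: "teq2 s t (D (s a * u)) (lact2 (s a) (D u))"
  and D_mult_target: "teq2 s t (D (u * t a)) (ract2 (D u) (t a))"
  and coassoc: "delta_left D (D u) - delta_right D (D u) \<in> tz3 s t"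
  and counit_source_mult: "\<epsilon> (s a * u) = a * \<epsilon> u"
  and counit_left: "tsum (D u) (\<lambda>x y. s (\<epsilon> x) * y) = u"
  and counit_right: "tsum (D u) (\<lambda>x y. x * t (\<epsilon> y)) = u"
  and antipode_source: "S (s a) = t a" and antipode_target: "S (t a) = s a"
  and antipode_left: "tsum (D u) (\<lambda>x y. S x * y) = t (\<epsilon> u)"
  and antipode_right: "tsum (D u) (\<lambda>x y. x * S y) = s (\<epsilon> u)"
  using hopf unfolding hopf_algebroid_def by (auto simp: fun_eq_iff)

lemma counit_source: "\<epsilon> (s a) = a"
  using counit_source_mult[of a 1] by (simp add: calg_simps[OF counit_calg])

(* \<psi> can follow \<phi>, i.e. \<psi> \<bullet> \<phi> = gcomp D \<psi> \<phi> is defined. *)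
definition composable :: "('h \<Rightarrow> 'r) \<Rightarrow> ('h \<Rightarrow> 'r) \<Rightarrow> bool"
  where "composable \<phi> \<psi> \<longleftrightarrow> \<psi> \<circ> s = \<phi> \<circ> t"

lemma composable_iff: "composable \<phi> \<psi> \<longleftrightarrow> (\<forall>a. \<psi> (s a) = \<phi> (t a))"
  by (simp add: composable_def fun_eq_iff)

lemma balanced2_gcomp:
  assumes "calg \<iota>H \<iota>R \<phi>" "calg \<iota>H \<iota>R \<psi>" "composable \<phi> \<psi>"
  shows "balanced2 s t (\<lambda>x y. \<phi> x * \<psi> y)"
  using assms by (simp add: balanced2_def composable_iff calg_simps algebra_simps)

lemma gcomp_calg:
  assumes \<phi>: "calg \<iota>H \<iota>R \<phi>" and \<psi>: "calg \<iota>H \<iota>R \<psi>" and "composable \<phi> \<psi>"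
  shows "calg \<iota>H \<iota>R (gcomp D \<psi> \<phi>)"
proof -
  note tsum_D = tsum_teq2[OF _ balanced2_gcomp[OF assms]]
  note simps = tsum_tpure calg_simps[OF \<phi>] calg_simps[OF \<psi>]
  have "gcomp D \<psi> \<phi> 1 = 1"
    unfolding gcomp_def tsum_D[OF D_one] by (simp add: simps)
  moreover have "gcomp D \<psi> \<phi> (u + v) = gcomp D \<psi> \<phi> u + gcomp D \<psi> \<phi> v" for u v
    unfolding gcomp_def tsum_D[OF D_add] by (simp add: tsum_eq_lin_ext lin_ext_add)
  moreover have "gcomp D \<psi> \<phi> (u * v) = gcomp D \<psi> \<phi> u * gcomp D \<psi> \<phi> v" for u v
    unfolding gcomp_def tsum_D[OF D_mult]
    unfolding tsum_eq_lin_ext lin_ext_tmul2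
    unfolding lin_ext_def sum_product
    by (intro sum.cong refl) (simp add: simps mult_ac)
  moreover have "gcomp D \<psi> \<phi> (\<iota>H c) = \<iota>R c" for c
    unfolding gcomp_def tsum_D[OF D_scalar] by (simp add: simps)
  ultimately show ?thesis by (simp add: calg_def)
qed

lemma gcomp_source:
  assumes \<phi>: "calg \<iota>H \<iota>R \<phi>" and \<psi>: "calg \<iota>H \<iota>R \<psi>" and "composable \<phi> \<psi>"
  shows "gcomp D \<psi> \<phi> (s a) = \<phi> (s a)"
proof -
  note tsum_D = tsum_teq2[OF _ balanced2_gcomp[OF assms]]
  have "gcomp D \<psi> \<phi> (s a) = tsum (D (s a * 1)) (\<lambda>x y. \<phi> x * \<psi> y)"
    by (simp add: gcomp_def)
  also have "\<dots> = \<phi> (s a) * tsum (D 1) (\<lambda>x y. \<phi> x * \<psi> y)"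
    unfolding tsum_D[OF D_source_mult]
    by (simp add: tsum_eq_lin_ext lin_ext_lact2 mult_lin_ext calg_simps[OF \<phi>] algebra_simps)
  also have "\<dots> = \<phi> (s a)"
    unfolding tsum_D[OF D_one] by (simp add: tsum_tpure calg_simps[OF \<phi>] calg_simps[OF \<psi>])
  finally show ?thesis .
qed

lemma gcomp_target:
  assumes \<phi>: "calg \<iota>H \<iota>R \<phi>" and \<psi>: "calg \<iota>H \<iota>R \<psi>" and "composable \<phi> \<psi>"
  shows "gcomp D \<psi> \<phi> (t a) = \<psi> (t a)"
proof -
  note tsum_D = tsum_teq2[OF _ balanced2_gcomp[OF assms]]
  have "gcomp D \<psi> \<phi> (t a) = tsum (D (1 * t a)) (\<lambda>x y. \<phi> x * \<psi> y)"
    by (simp add: gcomp_def)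
  also have "\<dots> = \<psi> (t a) * tsum (D 1) (\<lambda>x y. \<phi> x * \<psi> y)"
    unfolding tsum_D[OF D_mult_target]
    by (simp add: tsum_eq_lin_ext lin_ext_ract2 mult_lin_ext calg_simps[OF \<psi>] algebra_simps)
  also have "\<dots> = \<psi> (t a)"
    unfolding tsum_D[OF D_one] by (simp add: tsum_tpure calg_simps[OF \<phi>] calg_simps[OF \<psi>])
  finally show ?thesis .
qed

lemma composable_gcomp_left:
  "calg \<iota>H \<iota>R \<phi> \<Longrightarrow> calg \<iota>H \<iota>R \<psi> \<Longrightarrow> composable \<phi> \<psi> \<Longrightarrow> composable \<chi> \<phi>
    \<Longrightarrow> composable \<chi> (gcomp D \<psi> \<phi>)"
  by (simp add: composable_iff gcomp_source)

lemma composable_gcomp_right: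
  "calg \<iota>H \<iota>R \<phi> \<Longrightarrow> calg \<iota>H \<iota>R \<psi> \<Longrightarrow> composable \<phi> \<psi> \<Longrightarrow> composable \<psi> \<chi>
    \<Longrightarrow> composable (gcomp D \<psi> \<phi>) \<chi>"
  by (simp add: composable_iff gcomp_target)

lemma gcomp_assoc:
  assumes \<phi>: "calg \<iota>H \<iota>R \<phi>" and \<psi>: "calg \<iota>H \<iota>R \<psi>" and \<chi>: "calg \<iota>H \<iota>R \<chi>"
    and "composable \<phi> \<psi>" "composable \<psi> \<chi>"
  shows "gcomp D \<chi> (gcomp D \<psi> \<phi>) = gcomp D (gcomp D \<chi> \<psi>) \<phi>"
proof
  fix u
  define \<gamma> where "\<gamma> = (\<lambda>p :: 'h \<times> 'h \<times> 'h. \<phi> (fst p) * \<psi> (fst (snd p)) * \<chi> (snd (snd p)))"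
  have "balanced3 s t (\<lambda>x y z. \<phi> x * \<psi> y * \<chi> z)"
    using assms by (simp add: balanced3_def composable_iff calg_simps algebra_simps)
  from lin_ext_tz3[OF coassoc this]
  have "lin_ext (delta_left D (D u) - delta_right D (D u)) \<gamma> = 0"
    by (simp add: \<gamma>_def)
  then have coassoc_\<gamma>: "lin_ext (delta_left D (D u)) \<gamma> = lin_ext (delta_right D (D u)) \<gamma>"
    by (simp add: lin_ext_diff)
  have "gcomp D \<chi> (gcomp D \<psi> \<phi>) u = lin_ext (delta_left D (D u)) \<gamma>"
    by (simp add: gcomp_def tsum_eq_lin_ext lin_ext_delta_left mult_lin_ext \<gamma>_def mult.commute)
  also note coassoc_\<gamma>
  also have "lin_ext (delta_right D (D u)) \<gamma> = gcomp D (gcomp D \<chi> \<psi>) \<phi> u"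
    by (simp add: gcomp_def tsum_eq_lin_ext lin_ext_delta_right mult_lin_ext \<gamma>_def mult.assoc)
  finally show "gcomp D \<chi> (gcomp D \<psi> \<phi>) u = gcomp D (gcomp D \<chi> \<psi>) \<phi> u" .
qed

lemma gcomp_image:
  "calg \<iota>H \<iota>R g \<Longrightarrow> gcomp D (g \<circ> \<alpha>) (g \<circ> \<beta>) u = g (tsum (D u) (\<lambda>x y. \<beta> x * \<alpha> y))"
  by (simp add: gcomp_def tsum_eq_lin_ext calg_lin_ext calg_simps)

lemma gcomp_unit_left: "calg \<iota>H \<iota>R g \<Longrightarrow> gcomp D (g \<circ> t \<circ> \<epsilon>) g = g"
  using gcomp_image[where g = g and \<alpha> = "t \<circ> \<epsilon>" and \<beta> = id] by (simp add: fun_eq_iff o_assoc counit_right)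

lemma gcomp_unit_right: "calg \<iota>H \<iota>R g \<Longrightarrow> gcomp D g (g \<circ> s \<circ> \<epsilon>) = g"
  using gcomp_image[where g = g and \<alpha> = id and \<beta> = "s \<circ> \<epsilon>"] by (simp add: fun_eq_iff o_assoc counit_left)

lemma gcomp_inverse_left: "calg \<iota>H \<iota>R g \<Longrightarrow> gcomp D (g \<circ> S) g = g \<circ> s \<circ> \<epsilon>"
  using gcomp_image[where g = g and \<alpha> = S and \<beta> = id] by (simp add: fun_eq_iff antipode_right)

lemma gcomp_inverse_right: "calg \<iota>H \<iota>R g \<Longrightarrow> gcomp D g (g \<circ> S) = g \<circ> t \<circ> \<epsilon>"
  using gcomp_image[where g = g and \<alpha> = id and \<beta> = S] by (simp add: fun_eq_iff antipode_left)

lemma gcomp_divide: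
  assumes g: "calg \<iota>H \<iota>R g" and g': "calg \<iota>H \<iota>R g'" and same_source: "g \<circ> s = g' \<circ> s"
  shows "composable g (gcomp D g' (g \<circ> S))" and "gcomp D (gcomp D g' (g \<circ> S)) g = g'"
proof -
  have gS: "calg \<iota>H \<iota>R (g \<circ> S)" by (rule calg_comp[OF antipode_calg g])
  have g_gS: "composable g (g \<circ> S)" and gS_g': "composable (g \<circ> S) g'"
    using same_source by (simp_all add: composable_iff antipode_source antipode_target fun_eq_iff)
  show "composable g (gcomp D g' (g \<circ> S))"
    by (rule composable_gcomp_left[OF gS g' gS_g' g_gS])
  have "gcomp D (gcomp D g' (g \<circ> S)) g = gcomp D g' (gcomp D (g \<circ> S) g)"
    by (rule gcomp_assoc[OF g gS g' g_gS gS_g', symmetric])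
  also have "gcomp D (g \<circ> S) g = g' \<circ> s \<circ> \<epsilon>"
    using gcomp_inverse_left[OF g] same_source by (simp add: o_assoc)
  also have "gcomp D g' (g' \<circ> s \<circ> \<epsilon>) = g'"
    by (rule gcomp_unit_right[OF g'])
  finally show "gcomp D (gcomp D g' (g \<circ> S)) g = g'" .
qed

end

section \<open>Restriction to a sub-Hopf algebroid\<close>

locale hopf_subalgebroid = comm_hopf_algebroid \<iota>A \<iota>H s t \<epsilon> D S
  for \<iota>A :: "'k::field \<Rightarrow> 'a::comm_ring_1" and \<iota>H :: "'k \<Rightarrow> 'h::comm_ring_1"
    and s t :: "'a \<Rightarrow> 'h" and \<epsilon> :: "'h \<Rightarrow> 'a"
    and D :: "'h \<Rightarrow> ('h \<times> 'h \<Rightarrow>\<^sub>0 int)" and S :: "'h \<Rightarrow> 'h" +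
  fixes K :: "'h set"
  assumes sub: "sub_hopf_algebroid \<iota>H s t D S K"
begin

lemma source_in_K: "s a \<in> K"
  using sub by (simp add: sub_hopf_algebroid_def image_subset_iff)

lemma diff_in_K: "x \<in> K \<Longrightarrow> y \<in> K \<Longrightarrow> x - y \<in> K"
proof -
  assume "x \<in> K" "y \<in> K"
  moreover have "\<forall>x\<in>K. \<forall>y\<in>K. x + y \<in> K" "\<forall>x\<in>K. \<iota>H (- 1) * x \<in> K"
    using sub by (simp_all add: sub_hopf_algebroid_def)
  ultimately have "x + \<iota>H (- 1) * y \<in> K" by blast
  moreover have "\<iota>H (- 1) = - 1"
    using calg_simps(2,4)[OF kalg_imp_calg[OF kalg_H]] by simp
  ultimately show "x - y \<in> K" by simp
qed

lemma D_in_K_tensor_K: "k \<in> K \<Longrightarrow> \<exists>X. teq2 s t (D k) X \<and> Poly_Mapping.keys X \<subseteq> K \<times> K"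
  using sub by (simp add: sub_hopf_algebroid_def)

lemma gcomp_restrict_cong:
  assumes k: "k \<in> K"
    and \<phi>\<psi>: "calg \<iota>H \<iota>R \<phi>" "calg \<iota>H \<iota>R \<psi>" "composable \<phi> \<psi>"
    and \<phi>\<psi>': "calg \<iota>H \<iota>R \<phi>'" "calg \<iota>H \<iota>R \<psi>'" "composable \<phi>' \<psi>'"
    and on_K: "\<And>x. x \<in> K \<Longrightarrow> \<phi> x = \<phi>' x" "\<And>x. x \<in> K \<Longrightarrow> \<psi> x = \<psi>' x"
  shows "gcomp D \<psi> \<phi> k = gcomp D \<psi>' \<phi>' k"
proof -
  obtain X where X: "teq2 s t (D k) X" "Poly_Mapping.keys X \<subseteq> K \<times> K"
    using D_in_K_tensor_K[OF k] by blast
  have "gcomp D \<psi> \<phi> k = tsum X (\<lambda>x y. \<phi> x * \<psi> y)"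
    unfolding gcomp_def by (rule tsum_teq2[OF X(1) balanced2_gcomp[OF \<phi>\<psi>]])
  also have "\<dots> = tsum X (\<lambda>x y. \<phi>' x * \<psi>' y)"
    unfolding tsum_eq_lin_ext using X(2) on_K by (intro lin_ext_cong) auto
  also have "\<dots> = gcomp D \<psi>' \<phi>' k"
    unfolding gcomp_def by (rule tsum_teq2[OF X(1) balanced2_gcomp[OF \<phi>\<psi>'], symmetric])
  finally show ?thesis .
qed

definition restriction_kernel :: "('k \<Rightarrow> 'r::comm_ring_1) \<Rightarrow> ('h \<Rightarrow> 'r) set"
  where "restriction_kernel \<iota>R = {f. calg \<iota>H \<iota>R f \<and> (\<exists>x. calg \<iota>A \<iota>R x \<and> (\<forall>k\<in>K. f k = x (\<epsilon> k)))}"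

lemma restriction_kernel_iff:
  "f \<in> restriction_kernel \<iota>R \<longleftrightarrow> calg \<iota>H \<iota>R f \<and> (\<forall>k\<in>K. f k = f (s (\<epsilon> k)))"
proof
  assume "f \<in> restriction_kernel \<iota>R"
  then obtain x where "calg \<iota>H \<iota>R f" "\<forall>k\<in>K. f k = x (\<epsilon> k)"
    by (auto simp: restriction_kernel_def)
  then show "calg \<iota>H \<iota>R f \<and> (\<forall>k\<in>K. f k = f (s (\<epsilon> k)))"
    using source_in_K by (simp add: counit_source)
next
  assume "calg \<iota>H \<iota>R f \<and> (\<forall>k\<in>K. f k = f (s (\<epsilon> k)))"
  then show "f \<in> restriction_kernel \<iota>R"
    unfolding restriction_kernel_def using calg_comp[OF source_calg] by fastforce
qed

lemma unit_in_restriction_kernel: "calg \<iota>A \<iota>R x \<Longrightarrow> x \<circ> \<epsilon> \<in> restriction_kernel \<iota>R"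
  unfolding restriction_kernel_def using calg_comp[OF counit_calg] by auto

lemma gcomp_restriction_kernel_on_K:
  assumes \<psi>: "\<psi> \<in> restriction_kernel \<iota>R" and g: "calg \<iota>H \<iota>R g" and "composable g \<psi>"
    and k: "k \<in> K"
  shows "gcomp D \<psi> g k = g k"
proof -
  have \<psi>_calg: "calg \<iota>H \<iota>R \<psi>" and \<psi>_K: "\<And>x. x \<in> K \<Longrightarrow> \<psi> x = \<psi> (s (\<epsilon> x))"
    using \<psi> by (simp_all add: restriction_kernel_iff)
  define e where "e = g \<circ> t \<circ> \<epsilon>"
  have e: "calg \<iota>H \<iota>R e"
    unfolding e_def by (rule calg_comp[OF counit_calg calg_comp[OF target_calg g]])
  have "composable g e" by (simp add: composable_iff e_def counit_source)
  have "gcomp D \<psi> g k = gcomp D e g k"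
  proof (rule gcomp_restrict_cong[OF k g \<psi>_calg \<open>composable g \<psi>\<close> g e \<open>composable g e\<close>])
    show "\<psi> x = e x" if "x \<in> K" for x
      using \<psi>_K[OF that] \<open>composable g \<psi>\<close> by (simp add: composable_iff e_def)
  qed simp
  also have "\<dots> = g k" unfolding e_def by (simp add: gcomp_unit_left[OF g])
  finally show ?thesis .
qed

lemma gcomp_in_restriction_kernel:
  assumes \<psi>: "\<psi> \<in> restriction_kernel \<iota>R" and \<theta>: "\<theta> \<in> restriction_kernel \<iota>R"
    and "composable \<theta> \<psi>"
  shows "gcomp D \<psi> \<theta> \<in> restriction_kernel \<iota>R"
proof -
  have \<theta>_calg: "calg \<iota>H \<iota>R \<theta>" and \<psi>_calg: "calg \<iota>H \<iota>R \<psi>"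
    using \<psi> \<theta> by (simp_all add: restriction_kernel_iff)
  have "gcomp D \<psi> \<theta> k = gcomp D \<psi> \<theta> (s (\<epsilon> k))" if "k \<in> K" for k
    using gcomp_restriction_kernel_on_K[OF \<psi> \<theta>_calg \<open>composable \<theta> \<psi>\<close> that] \<theta> that
      gcomp_source[OF \<theta>_calg \<psi>_calg \<open>composable \<theta> \<psi>\<close>]
    by (simp add: restriction_kernel_iff)
  then show ?thesis
    using gcomp_calg[OF \<theta>_calg \<psi>_calg \<open>composable \<theta> \<psi>\<close>] by (simp add: restriction_kernel_iff)
qed

lemma gcomp_inverse_in_restriction_kernel:
  assumes g: "calg \<iota>H \<iota>R g" and g': "calg \<iota>H \<iota>R g'" and on_K: "\<And>k. k \<in> K \<Longrightarrow> g k = g' k"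
  shows "gcomp D g' (g \<circ> S) \<in> restriction_kernel \<iota>R"
proof -
  have gS: "calg \<iota>H \<iota>R (g \<circ> S)" by (rule calg_comp[OF antipode_calg g])
  have "composable (g \<circ> S) g" "composable (g \<circ> S) g'"
    using on_K[OF source_in_K] by (simp_all add: composable_iff antipode_target)
  then have "gcomp D g' (g \<circ> S) k = gcomp D g (g \<circ> S) k" if "k \<in> K" for k
    using gcomp_restrict_cong[OF that gS g' _ gS g] on_K by simp
  then have "gcomp D g' (g \<circ> S) k = (g \<circ> t) (\<epsilon> k)" if "k \<in> K" for k
    using that by (simp add: gcomp_inverse_right[OF g])
  moreover have "calg \<iota>H \<iota>R (gcomp D g' (g \<circ> S))"
    by (rule gcomp_calg[OF gS g' \<open>composable (g \<circ> S) g'\<close>])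
  ultimately show ?thesis
    unfolding restriction_kernel_def using calg_comp[OF target_calg g] by blast
qed

lemma ideal_HKplus: "ideal (HKplus \<epsilon> K) type_ring"
  unfolding HKplus_def by (rule ring.genideal_ideal[OF ring_type_ring]) simp

lemma diff_counit_in_HKplus: "k \<in> K \<Longrightarrow> k - s (\<epsilon> k) \<in> HKplus \<epsilon> K"
proof -
  assume "k \<in> K"
  then have "k - s (\<epsilon> k) \<in> Kplus \<epsilon> K"
    using diff_in_K[OF _ source_in_K] by (simp add: Kplus_def calg_simps[OF counit_calg] counit_source)
  then show ?thesis
    unfolding HKplus_def using ring.genideal_self[OF ring_type_ring] by auto
qed

lemma qproj_ring_hom: "qproj \<epsilon> K \<in> ring_hom type_ring (type_ring Quot HKplus \<epsilon> K)"
  unfolding qproj_def[abs_def] by (rule ideal.rcos_ring_hom[OF ideal_HKplus])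

lemma qcalg_comp_qproj_in_restriction_kernel:
  assumes "qcalg \<iota>H \<iota>R \<epsilon> K h"
  shows "h \<circ> qproj \<epsilon> K \<in> restriction_kernel \<iota>R"
proof -
  have h: "h \<in> ring_hom (type_ring Quot HKplus \<epsilon> K) type_ring"
    and h_scalar: "\<And>c. h (qproj \<epsilon> K (\<iota>H c)) = \<iota>R c"
    using assms by (simp_all add: qcalg_def)
  have f: "calg \<iota>H \<iota>R (h \<circ> qproj \<epsilon> K)"
    using ring_hom_trans[OF qproj_ring_hom h] h_scalar by (simp add: calg_iff_ring_hom)
  have vanish: "h (qproj \<epsilon> K i) = 0" if "i \<in> HKplus \<epsilon> K" for i
  proof -
    have "qproj \<epsilon> K i = \<zero>\<^bsub>type_ring Quot HKplus \<epsilon> K\<^esub>"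
      using ring.a_rcos_zero[OF ring_type_ring ideal_HKplus that] by (simp add: qproj_def FactRing_def)
    then show ?thesis
      using ring_hom_zero[OF h ideal.quotient_is_ring[OF ideal_HKplus] ring_type_ring] by simp
  qed
  have "(h \<circ> qproj \<epsilon> K) k = (h \<circ> qproj \<epsilon> K) (s (\<epsilon> k))" if "k \<in> K" for k
  proof -
    have "(h \<circ> qproj \<epsilon> K) k - (h \<circ> qproj \<epsilon> K) (s (\<epsilon> k)) = (h \<circ> qproj \<epsilon> K) (k - s (\<epsilon> k))"
      by (rule calg_simps(3)[OF f, symmetric])
    also have "\<dots> = 0" using vanish[OF diff_counit_in_HKplus[OF that]] by simp
    finally show ?thesis by simp
  qed
  then show ?thesis
    using f by (simp add: restriction_kernel_iff)
qed

lemma restriction_kernel_factors_through_qproj: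
  assumes "f \<in> restriction_kernel \<iota>R"
  shows "\<exists>h. qcalg \<iota>H \<iota>R \<epsilon> K h \<and> f = h \<circ> qproj \<epsilon> K"
proof -
  have f: "calg \<iota>H \<iota>R f" and f_K: "\<And>k. k \<in> K \<Longrightarrow> f k = f (s (\<epsilon> k))"
    using assms by (simp_all add: restriction_kernel_iff)
  have f_hom: "f \<in> ring_hom type_ring type_ring"
    using f by (simp add: calg_iff_ring_hom)
  have "f k = 0" if "k \<in> Kplus \<epsilon> K" for k
    using that f_K[of k] by (simp add: Kplus_def calg_simps[OF f] calg_simps[OF source_calg])
  then have Kplus_ker: "Kplus \<epsilon> K \<subseteq> a_kernel type_ring type_ring f"
    by (auto simp: a_kernel_def')
  interpret f: ring_hom_ring type_ring type_ring f
    by (rule ring_hom_ringI2[OF ring_type_ring ring_type_ring f_hom])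
  from Kplus_ker have ker: "HKplus \<epsilon> K \<subseteq> a_kernel type_ring type_ring f"
    unfolding HKplus_def by (rule ring.genideal_minimal[OF ring_type_ring f.kernel_is_ideal])
  define h where "h = (\<lambda>X. the_elem (f ` X))"
  have h_qproj: "h (qproj \<epsilon> K x) = f x" for x
    unfolding h_def qproj_def using f.quotient_lift(2)[OF ideal_HKplus ker, of x] by simp
  have "h \<in> ring_hom (type_ring Quot HKplus \<epsilon> K) type_ring"
    unfolding h_def by (rule f.quotient_lift(1)[OF ideal_HKplus ker])
  then have "qcalg \<iota>H \<iota>R \<epsilon> K h"
    unfolding qcalg_def h_qproj by (simp add: calg_simps[OF f])
  moreover have "f = h \<circ> qproj \<epsilon> K"
    by (simp add: fun_eq_iff h_qproj)
  ultimately show ?thesis by blast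
qed

lemma restriction_kernel_eq: "restriction_kernel \<iota>R = {h \<circ> qproj \<epsilon> K | h. qcalg \<iota>H \<iota>R \<epsilon> K h}"
  using qcalg_comp_qproj_in_restriction_kernel restriction_kernel_factors_through_qproj by blast

lemma orbit_eq_restriction_kernel:
  "orbit \<iota>H \<iota>R s t \<epsilon> D K g = {gcomp D \<psi> g | \<psi>. \<psi> \<in> restriction_kernel \<iota>R \<and> composable g \<psi>}"
  unfolding orbit_def restriction_kernel_eq composable_def by blast

lemma in_orbit_self:
  assumes g: "calg \<iota>H \<iota>R g"
  shows "g \<in> orbit \<iota>H \<iota>R s t \<epsilon> D K g"
proof -
  have "g \<circ> t \<circ> \<epsilon> \<in> restriction_kernel \<iota>R"
    by (rule unit_in_restriction_kernel[OF calg_comp[OF target_calg g]])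
  moreover have "composable g (g \<circ> t \<circ> \<epsilon>)"
    by (simp add: composable_iff counit_source)
  moreover have "g = gcomp D (g \<circ> t \<circ> \<epsilon>) g"
    by (rule gcomp_unit_left[OF g, symmetric])
  ultimately show ?thesis unfolding orbit_eq_restriction_kernel by blast
qed

lemma restrict_eq_if_orbit_eq:
  assumes g: "calg \<iota>H \<iota>R g" and g': "calg \<iota>H \<iota>R g'"
    and "orbit \<iota>H \<iota>R s t \<epsilon> D K g = orbit \<iota>H \<iota>R s t \<epsilon> D K g'" and "k \<in> K"
  shows "g k = g' k"
proof -
  obtain \<psi> where "\<psi> \<in> restriction_kernel \<iota>R" "composable g' \<psi>" "g = gcomp D \<psi> g'"
    using in_orbit_self[OF g] assms(3) unfolding orbit_eq_restriction_kernel by blast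
  then show ?thesis
    using gcomp_restriction_kernel_on_K[OF _ g' _ \<open>k \<in> K\<close>] by simp
qed

lemma orbit_subset_if_restrict_eq:
  assumes g: "calg \<iota>H \<iota>R g" and g': "calg \<iota>H \<iota>R g'" and on_K: "\<And>k. k \<in> K \<Longrightarrow> g k = g' k"
  shows "orbit \<iota>H \<iota>R s t \<epsilon> D K g' \<subseteq> orbit \<iota>H \<iota>R s t \<epsilon> D K g"
proof
  fix F assume "F \<in> orbit \<iota>H \<iota>R s t \<epsilon> D K g'"
  then obtain \<psi> where \<psi>: "\<psi> \<in> restriction_kernel \<iota>R" "composable g' \<psi>" and F: "F = gcomp D \<psi> g'"
    unfolding orbit_eq_restriction_kernel by blast
  define \<theta> where "\<theta> = gcomp D g' (g \<circ> S)"
  have gS: "calg \<iota>H \<iota>R (g \<circ> S)" by (rule calg_comp[OF antipode_calg g])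
  have \<theta>: "\<theta> \<in> restriction_kernel \<iota>R"
    unfolding \<theta>_def by (rule gcomp_inverse_in_restriction_kernel[OF g g' on_K])
  have "g \<circ> s = g' \<circ> s" using on_K[OF source_in_K] by (simp add: fun_eq_iff)
  note divide = gcomp_divide[OF g g' this, folded \<theta>_def]
  have "composable (g \<circ> S) g'"
    using on_K[OF source_in_K] by (simp add: composable_iff antipode_target)
  then have "composable \<theta> \<psi>"
    unfolding \<theta>_def by (rule composable_gcomp_right[OF gS g' _ \<psi>(2)])
  have \<theta>_calg: "calg \<iota>H \<iota>R \<theta>" and \<psi>_calg: "calg \<iota>H \<iota>R \<psi>"
    using \<theta> \<psi>(1) by (simp_all add: restriction_kernel_iff)
  have "F = gcomp D \<psi> (gcomp D \<theta> g)" by (simp add: F divide(2))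
  also have "\<dots> = gcomp D (gcomp D \<psi> \<theta>) g"
    by (rule gcomp_assoc[OF g \<theta>_calg \<psi>_calg divide(1) \<open>composable \<theta> \<psi>\<close>])
  finally show "F \<in> orbit \<iota>H \<iota>R s t \<epsilon> D K g"
    unfolding orbit_eq_restriction_kernel
    using gcomp_in_restriction_kernel[OF \<psi>(1) \<theta> \<open>composable \<theta> \<psi>\<close>]
      composable_gcomp_left[OF \<theta>_calg \<psi>_calg \<open>composable \<theta> \<psi>\<close> divide(1)]
    by blast
qed

end

theorem proposition3p30:
  fixes \<iota>A :: "'k::field \<Rightarrow> 'a::comm_ring_1" and \<iota>H :: "'k \<Rightarrow> 'h::comm_ring_1"
    and \<iota>R :: "'k \<Rightarrow> 'r::comm_ring_1"
    and s t :: "'a \<Rightarrow> 'h" and \<epsilon> :: "'h \<Rightarrow> 'a"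
    and D :: "'h \<Rightarrow> ('h \<times> 'h \<Rightarrow>\<^sub>0 int)" and S :: "'h \<Rightarrow> 'h" and K :: "'h set"
  assumes "hopf_algebroid \<iota>A \<iota>H s t \<epsilon> D S"
    and "sub_hopf_algebroid \<iota>H s t D S K"
    and "kalg \<iota>R"
  shows "{f. calg \<iota>H \<iota>R f \<and> (\<exists>x. calg \<iota>A \<iota>R x \<and> (\<forall>k\<in>K. f k = x (\<epsilon> k)))}
           = {h \<circ> qproj \<epsilon> K | h. qcalg \<iota>H \<iota>R \<epsilon> K h}
       \<and> (\<forall>g g'. calg \<iota>H \<iota>R g \<longrightarrow> calg \<iota>H \<iota>R g' \<longrightarrow>
            ((\<forall>k\<in>K. g k = g' k) \<longleftrightarrow> orbit \<iota>H \<iota>R s t \<epsilon> D K g = orbit \<iota>H \<iota>R s t \<epsilon> D K g'))"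
proof -
  interpret hopf_subalgebroid \<iota>A \<iota>H s t \<epsilon> D S K
    by unfold_locales (fact assms(1), fact assms(2))
  have "(\<forall>k\<in>K. g k = g' k) \<longleftrightarrow> orbit \<iota>H \<iota>R s t \<epsilon> D K g = orbit \<iota>H \<iota>R s t \<epsilon> D K g'"
    if g: "calg \<iota>H \<iota>R g" and g': "calg \<iota>H \<iota>R g'" for g g'
  proof
    assume "\<forall>k\<in>K. g k = g' k"
    then show "orbit \<iota>H \<iota>R s t \<epsilon> D K g = orbit \<iota>H \<iota>R s t \<epsilon> D K g'"
      using orbit_subset_if_restrict_eq[OF g g'] orbit_subset_if_restrict_eq[OF g' g]
      by (simp add: subset_antisym)
  next
    assume "orbit \<iota>H \<iota>R s t \<epsilon> D K g = orbit \<iota>H \<iota>R s t \<epsilon> D K g'"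
    then show "\<forall>k\<in>K. g k = g' k" using restrict_eq_if_orbit_eq[OF g g'] by blast
  qed
  then show ?thesis
    using restriction_kernel_eq[of \<iota>R] unfolding restriction_kernel_def by blast
qed

end
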